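(* Let $t$ be a term such that $t\to_h^{(b,e,m)}u$ with $u\in\mathcal{M}$ (a head-reduction sequence with exactly $b$ steps of kind (b), $e$ steps of kind (e) and $m$ steps of kind (m)). Then there exists a tight derivation $\Phi\triangleright\Gamma\vdash^{(b,e,m,|u|)}t:\mathtt{t}$ in system $\mathscr{E}$, for some context $\Gamma$ and tight type $\mathtt{t}$.
   Context: Pair pattern calculus: patterns $p,q ::= x\mid\langle p,q\rangle$ (linear); $\mathrm{var}(p)$ = variables of $p$; $p\# q$ means disjoint variables. Terms $t,u ::= x\mid\lambda p.t\mid\langle t,u\rangle\mid t\,u\mid t[p/u]$, $\mathrm{var}(p)$ bound in $t$ in $\lambda p.t$ and $t[p/u]$; $\mathrm{fv}$ as usual; terms modulo $\alpha$. List contexts $L::=\Box\mid L[p/u]$, $L\langle t\rangle$ plugging (possibly capturing), $\mathrm{bv}(L)$ variables bound by $L$; $t\{x/u\}$ capture-avoiding substitution; $\mathrm{abs}(t)$ iff $t=L\langle\lambda p.u\rangle$. Head reduction ($t\not\to_h$: no $u$ with $t\to_h u$): (b) $L\langle\lambda p.t\rangle u\to_h L\langle t[p/u]\rangle$ if $\mathrm{bv}(L)\cap\mathrm{fv}(u)=\emptyset$; (m) $t[\langle p_1,p_2\rangle/L\langle\langle u_1,u_2\rangle\rangle]\to_h L\langle t[p_1/u_1][p_2/u_2]\rangle$ if $t\not\to_h$ and $\mathrm{bv}(L)\cap\mathrm{fv}(t)=\emptyset$; (e) $t[x/u]\to_h t\{x/u\}$ if $t\not\to_h$; closure: $\lambda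 p.t\to_h\lambda p.t'$ if $t\to_h t'$; $tu\to_h t'u$ if $t\to_h t'$ and not $\mathrm{abs}(t)$; $t[p/u]\to_h t'[p/u]$ if $t\to_h t'$; $t[p/u]\to_h t[p/u']$ if $t\not\to_h$, $p$ not a variable, $u\to_h u'$. The kind of a step is the base rule (b), (e) or (m) it uses. Canonical forms $\mathcal{M} ::= \lambda p.\mathcal{M}\mid\langle t,t\rangle\mid\mathcal{M}[\langle p_1,p_2\rangle/\mathcal{N}]\mid\mathcal{N}$, $\mathcal{N} ::= x\mid\mathcal{N}\,t\mid\mathcal{N}[\langle p_1,p_2\rangle/\mathcal{N}]$, with size $|x|=0$, $|\langle t,u\rangle|=1$, $|\mathcal{N}t|=|\mathcal{N}|+1$, $|\lambda p.\mathcal{M}|=|\mathcal{M}|+1$, $|\mathcal{M}[\langle p_1,p_2\rangle/\mathcal{N}]|=|\mathcal{M}|+|\mathcal{N}|+1$. System $\mathscr{E}$. Types: tight types $\mathtt{t} ::= \bullet_{\mathcal{N}}\mid\bullet_{\mathcal{M}}$; types $\sigma ::= \mathtt{t}\mid \mathcal{A}_1\times\mathcal{A}_2\mid \mathcal{A}\to\sigma$; multi-types $\mathcal{A} ::= [\sigma_k]_{k\in K}$ (finite, possibly empty). Contexts map variables to multi-types, $\mathrm{dom}(\Gamma)$ = variables with non-empty multi-type; $\wedge$ pointwise multiset union; $\Gamma|_p$ restriction to $\mathrm{var}(p)$; $\Gamma\setminus\mathrm{var}(p)$ removal. $\mathrm{tight}(\sigma)$ iff $\sigma\in\{\bullet_{\mathcal{N}},\bullet_{\mathcal{M}}\}$,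 extended elementwise. Rules: (pat_v) $x:\mathcal{A}\Vdash^{(1,0,0)} x:\mathcal{A}$. (pat_×) from $\Gamma\Vdash^{(e_p,m_p,f_p)}p:\mathcal{A}$, $\Delta\Vdash^{(e_q,m_q,f_q)}q:\mathcal{B}$, $p\#q$ infer $\Gamma\wedge\Delta\Vdash^{(e_p+e_q,1+m_p+m_q,f_p+f_q)}\langle p,q\rangle:[\mathcal{A}\times\mathcal{B}]$. (pat_p) if $\mathrm{dom}(\Gamma)\subseteq\mathrm{var}(\langle p,q\rangle)$ and $\mathrm{tight}(\Gamma)$ then $\Gamma\Vdash^{(0,0,1)}\langle p,q\rangle:[\bullet_{\mathcal{N}}]$. (ax) $x:[\sigma]\vdash^{(0,0,0,0)}x:\sigma$. (abs) from $\Gamma\vdash^{(b,e,m,f)}t:\sigma$ and $\Gamma|_p\Vdash^{(e_p,m_p,f_p)}p:\mathcal{A}$ infer $\Gamma\setminus\mathrm{var}(p)\vdash^{(b+1,e+e_p,m+m_p,f+f_p)}\lambda p.t:\mathcal{A}\to\sigma$. (abs_p) from $\Gamma\vdash^{(b,e,m,f)}t:\mathtt{t}$ ($\mathtt{t}$ tight) and $\mathrm{tight}(\Gamma|_p)$ infer $\Gamma\setminus\mathrm{var}(p)\vdash^{(b,e,m,f+1)}\lambda p.t:\bullet_{\mathcal{M}}$. (many) from $(\Gamma_k\vdash^{(b_k,e_k,m_k,f_k)}t:\sigma_k)_{k\in K}$ infer $\wedge_k\Gamma_k\vdash^{(\sum b_k,\sum e_k,\sum m_k,\sum f_k)}t:[\sigma_k]_{k\in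 K}$. (app) from $\Gamma\vdash^{(b_t,e_t,m_t,f_t)}t:\mathcal{A}\to\sigma$, $\Delta\vdash^{(b_u,e_u,m_u,f_u)}u:\mathcal{A}$ infer $\Gamma\wedge\Delta\vdash^{(b_t+b_u,e_t+e_u,m_t+m_u,f_t+f_u)}t\,u:\sigma$. (app_p) from $\Gamma\vdash^{(b,e,m,f)}t:\bullet_{\mathcal{N}}$ infer $\Gamma\vdash^{(b,e,m,f+1)}t\,u:\bullet_{\mathcal{N}}$. (pair) from $\Gamma\vdash^{(b_t,e_t,m_t,f_t)}t:\mathcal{A}$, $\Delta\vdash^{(b_u,e_u,m_u,f_u)}u:\mathcal{B}$ infer $\Gamma\wedge\Delta\vdash^{(b_t+b_u,e_t+e_u,m_t+m_u,f_t+f_u)}\langle t,u\rangle:\mathcal{A}\times\mathcal{B}$. (pair_p) $\vdash^{(0,0,0,1)}\langle t,u\rangle:\bullet_{\mathcal{M}}$. (match) from $\Gamma\vdash^{(b_t,e_t,m_t,f_t)}t:\sigma$, $\Gamma|_p\Vdash^{(e_p,m_p,f_p)}p:\mathcal{A}$, $\Delta\vdash^{(b_u,e_u,m_u,f_u)}u:\mathcal{A}$ infer $(\Gamma\setminus\mathrm{var}(p))\wedge\Delta\vdash^{(b_t+b_u,e_t+e_u+e_p,m_t+m_u+m_p,f_t+f_u+f_p)}t[p/u]:\sigma$. A derivation is tight if its context and its type are tight. *)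

theory Defs
  imports Main "HOL-Library.Multiset"
begin

text \<open>Pair pattern calculus, terms modulo alpha represented with de Bruijn indices. Convention: under a binder for the pattern PP p q,
  the indices 0 .. nv p - 1 denote the variables of p (recursively, same convention)
  and the indices nv p .. nv p + nv q - 1 denote those of q; larger indices are free
  variables (shifted by nv (PP p q)). Linearity is automatic.\<close>

datatype pat = PV | PP pat pat

fun nv :: "pat \<Rightarrow> nat" where
  "nv PV = 1"
| "nv (PP p q) = nv p + nv q"

text \<open>Sub t p u stands for the explicit matching t[p/u]; the variables of p are bound in t.\<close>
datatype trm = Var nat | Lam pat trm | Pair trm trm | App trm trm | Sub trm pat trm

fun shift :: "nat \<Rightarrow> nat \<Rightarrow> trm \<Rightarrow> trm" where
  "shift k c (Var i) = Var (if i < c then i else i + k)"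
| "shift k c (Lam p t) = Lam p (shift k (c + nv p) t)"
| "shift k c (Pair t u) = Pair (shift k c t) (shift k c u)"
| "shift k c (App t u) = App (shift k c t) (shift k c u)"
| "shift k c (Sub t p u) = Sub (shift k (c + nv p) t) p (shift k c u)"

fun subst :: "nat \<Rightarrow> trm \<Rightarrow> trm \<Rightarrow> trm" where
  "subst c s (Var i) = (if i < c then Var i else if i = c then shift c 0 s else Var (i - 1))"
| "subst c s (Lam p t) = Lam p (subst (c + nv p) s t)"
| "subst c s (Pair t u) = Pair (subst c s t) (subst c s u)"
| "subst c s (App t u) = App (subst c s t) (subst c s u)"
| "subst c s (Sub t p u) = Sub (subst (c + nv p) s t) p (subst c s u)"

text \<open>List contexts L ::= Box | L[p/u], as a list with the outermost substitution first.\<close>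
type_synonym lctx = "(pat \<times> trm) list"

fun plug :: "lctx \<Rightarrow> trm \<Rightarrow> trm" where
  "plug [] t = t"
| "plug ((p, w) # L) t = Sub (plug L t) p w"

definition nbv :: "lctx \<Rightarrow> nat" where
  "nbv L = sum_list (map (nv \<circ> fst) L)"

definition is_abs :: "trm \<Rightarrow> bool" where
  "is_abs t \<longleftrightarrow> (\<exists>L p s. t = plug L (Lam p s))"

datatype kind = KB | KE | KM

text \<open>The side conditions bv(L) \<inter> fv(...) = {} are always satisfiable modulo alpha;
  in de Bruijn form they become the shifts below.\<close>
fun hred :: "trm \<Rightarrow> (kind \<times> trm) set" where
  "hred (Var x) = {}"
| "hred (Pair t u) = {}"
| "hred (Lam p t) = {(k, Lam p t') | k t'. (k, t') \<in> hred t}"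
| "hred (App s u) =
     {(KB, plug L (Sub t p (shift (nbv L) 0 u))) | L p t. s = plug L (Lam p t)}
     \<union> (if is_abs s then {} else {(k, App s' u) | k s'. (k, s') \<in> hred s})"
| "hred (Sub t PV u) =
     (if hred t = {} then {(KE, subst 0 u t)} else {})
     \<union> {(k, Sub t' PV u) | k t'. (k, t') \<in> hred t}"
| "hred (Sub t (PP p1 p2) u) =
     (if hred t = {} then
        {(KM, plug L (Sub (Sub (shift (nbv L) (nv p1 + nv p2) t) p1 (shift (nv p2) 0 u1)) p2 u2))
          | L u1 u2. u = plug L (Pair u1 u2)}
      else {})
     \<union> {(k, Sub t' (PP p1 p2) u) | k t'. (k, t') \<in> hred t}
     \<union> (if hred t = {} then {(k, Sub t (PP p1 p2) u') | k u'. (k, u') \<in> hred u} else {})"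

inductive hsteps :: "trm \<Rightarrow> nat \<Rightarrow> nat \<Rightarrow> nat \<Rightarrow> trm \<Rightarrow> bool" where
  hs_refl: "hsteps t 0 0 0 t"
| hs_B: "(KB, t') \<in> hred t \<Longrightarrow> hsteps t' b e m u \<Longrightarrow> hsteps t (Suc b) e m u"
| hs_E: "(KE, t') \<in> hred t \<Longrightarrow> hsteps t' b e m u \<Longrightarrow> hsteps t b (Suc e) m u"
| hs_M: "(KM, t') \<in> hred t \<Longrightarrow> hsteps t' b e m u \<Longrightarrow> hsteps t b e (Suc m) u"

inductive canM :: "trm \<Rightarrow> bool" and canN :: "trm \<Rightarrow> bool" where
  cM_lam: "canM t \<Longrightarrow> canM (Lam p t)"
| cM_pair: "canM (Pair t u)"
| cM_sub: "canM t \<Longrightarrow> canN n \<Longrightarrow> canM (Sub t (PP p1 p2) n)"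
| cM_N: "canN n \<Longrightarrow> canM n"
| cN_var: "canN (Var x)"
| cN_app: "canN n \<Longrightarrow> canN (App n t)"
| cN_sub: "canN n \<Longrightarrow> canN n' \<Longrightarrow> canN (Sub n (PP p1 p2) n')"

text \<open>Size of canonical forms (defined on all terms, meaningful on canonical ones).\<close>
fun csize :: "trm \<Rightarrow> nat" where
  "csize (Var x) = 0"
| "csize (Pair t u) = 1"
| "csize (App n t) = csize n + 1"
| "csize (Lam p t) = csize t + 1"
| "csize (Sub t p n) = csize t + csize n + 1"

datatype tight = TN | TM
datatype ty = Tt tight | Prod "ty multiset" "ty multiset" | Arr "ty multiset" ty

type_synonym ctx = "nat \<Rightarrow> ty multiset"

definition is_tight :: "ty \<Rightarrow> bool" where
  "is_tight \<sigma> \<longleftrightarrow> (\<exists>tt. \<sigma> = Tt tt)"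

definition tight_ctx :: "ctx \<Rightarrow> bool" where
  "tight_ctx \<Gamma> \<longleftrightarrow> (\<forall>x. \<forall>\<sigma>\<in>#\<Gamma> x. is_tight \<sigma>)"

definition empty_ctx :: ctx where
  "empty_ctx = (\<lambda>_. {#})"

definition ctx_union :: "ctx \<Rightarrow> ctx \<Rightarrow> ctx" where
  "ctx_union \<Gamma> \<Delta> = (\<lambda>x. \<Gamma> x + \<Delta> x)"

definition ctx_restr :: "nat \<Rightarrow> ctx \<Rightarrow> ctx" where
  "ctx_restr n \<Gamma> = (\<lambda>x. if x < n then \<Gamma> x else {#})"

definition ctx_drop :: "nat \<Rightarrow> ctx \<Rightarrow> ctx" where
  "ctx_drop n \<Gamma> = (\<lambda>x. \<Gamma> (x + n))"

inductive ptyp :: "ctx \<Rightarrow> pat \<Rightarrow> ty multiset \<Rightarrow> nat \<Rightarrow> nat \<Rightarrow> nat \<Rightarrow> bool" where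
  pat_v: "ptyp (\<lambda>x. if x = 0 then A else {#}) PV A 1 0 0"
| pat_prod: "ptyp \<Gamma> p A ep mp fp \<Longrightarrow> ptyp \<Delta> q B eq mq fq \<Longrightarrow>
    ptyp (\<lambda>x. if x < nv p then \<Gamma> x else \<Delta> (x - nv p)) (PP p q) {#Prod A B#}
      (ep + eq) (1 + mp + mq) (fp + fq)"
| pat_p: "(\<forall>x. x \<ge> nv (PP p q) \<longrightarrow> \<Gamma> x = {#}) \<Longrightarrow> tight_ctx \<Gamma> \<Longrightarrow>
    ptyp \<Gamma> (PP p q) {#Tt TN#} 0 0 1"

inductive etyp :: "ctx \<Rightarrow> trm \<Rightarrow> ty \<Rightarrow> nat \<Rightarrow> nat \<Rightarrow> nat \<Rightarrow> nat \<Rightarrow> bool"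
  and metyp :: "ctx \<Rightarrow> trm \<Rightarrow> ty multiset \<Rightarrow> nat \<Rightarrow> nat \<Rightarrow> nat \<Rightarrow> nat \<Rightarrow> bool" where
  t_ax: "etyp (\<lambda>y. if y = x then {#\<sigma>#} else {#}) (Var x) \<sigma> 0 0 0 0"
| t_abs: "etyp \<Gamma> t \<sigma> b e m f \<Longrightarrow> ptyp (ctx_restr (nv p) \<Gamma>) p A ep mp fp \<Longrightarrow>
    etyp (ctx_drop (nv p) \<Gamma>) (Lam p t) (Arr A \<sigma>) (b + 1) (e + ep) (m + mp) (f + fp)"
| t_abs_p: "etyp \<Gamma> t (Tt tt) b e m f \<Longrightarrow> tight_ctx (ctx_restr (nv p) \<Gamma>) \<Longrightarrow>
    etyp (ctx_drop (nv p) \<Gamma>) (Lam p t) (Tt TM) b e m (f + 1)"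
| t_app: "etyp \<Gamma> t (Arr A \<sigma>) bt et mt ft \<Longrightarrow> metyp \<Delta> u A bu eu mu fu \<Longrightarrow>
    etyp (ctx_union \<Gamma> \<Delta>) (App t u) \<sigma> (bt + bu) (et + eu) (mt + mu) (ft + fu)"
| t_app_p: "etyp \<Gamma> t (Tt TN) b e m f \<Longrightarrow> etyp \<Gamma> (App t u) (Tt TN) b e m (f + 1)"
| t_pair: "metyp \<Gamma> t A bt et mt ft \<Longrightarrow> metyp \<Delta> u B bu eu mu fu \<Longrightarrow>
    etyp (ctx_union \<Gamma> \<Delta>) (Pair t u) (Prod A B) (bt + bu) (et + eu) (mt + mu) (ft + fu)"
| t_pair_p: "etyp empty_ctx (Pair t u) (Tt TM) 0 0 0 1"
| t_match: "etyp \<Gamma> t \<sigma> bt et mt ft \<Longrightarrow> ptyp (ctx_restr (nv p) \<Gamma>) p A ep mp fp \<Longrightarrow>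
    metyp \<Delta> u A bu eu mu fu \<Longrightarrow>
    etyp (ctx_union (ctx_drop (nv p) \<Gamma>) \<Delta>) (Sub t p u) \<sigma>
      (bt + bu) (et + eu + ep) (mt + mu + mp) (ft + fu + fp)"
| m_empty: "metyp empty_ctx t {#} 0 0 0 0"
| m_add: "metyp \<Gamma> t A b e m f \<Longrightarrow> etyp \<Delta> t \<sigma> b' e' m' f' \<Longrightarrow>
    metyp (ctx_union \<Gamma> \<Delta>) t (add_mset \<sigma> A) (b + b') (e + e') (m + m') (f + f')"

end

theory Submission
  imports Defs
begin

text \<open>A canonical form \<open>u\<close> has a tight typing with counters \<open>(0, 0, 0, |u|)\<close>: every
  constructor of \<open>u\<close> is typed by a persistent rule, which adds exactly one to the last counter.
  Head steps can be undone on typings (subject expansion): every typing of the reduct yields a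
  typing of the redex with the same context, type and last counter, and with the counter of the
  kind of the step increased by one. For (e) steps this is anti-substitution, a typing of
  \<open>t{x/u}\<close> splitting into a typing of \<open>t\<close> and a multi-typing of \<open>u\<close> at the multi-type of \<open>x\<close>.
  For (b) and (m) steps fired under a list context, the explicit matchings of the context are
  commuted outwards one at a time; this is possible because a pair pattern is typed with a single
  type, so the term it matches is typed exactly once.\<close>

section \<open>Contexts and multi-typings\<close>

lemma ctx_union_empty [simp]: "ctx_union empty_ctx \<Gamma> = \<Gamma>" "ctx_union \<Gamma> empty_ctx = \<Gamma>"
  by (auto simp: ctx_union_def empty_ctx_def)

lemma ctx_union_assoc: "ctx_union (ctx_union \<Gamma> \<Delta>) \<Theta> = ctx_union \<Gamma> (ctx_union \<Delta> \<Theta>)"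
  by (auto simp: ctx_union_def add.assoc)

lemma ctx_union_commute: "ctx_union \<Gamma> \<Delta> = ctx_union \<Delta> \<Gamma>"
  by (auto simp: ctx_union_def add.commute)

lemma ctx_union_left_commute: "ctx_union \<Gamma> (ctx_union \<Delta> \<Theta>) = ctx_union \<Delta> (ctx_union \<Gamma> \<Theta>)"
  by (auto simp: ctx_union_def add.left_commute)

lemmas ctx_union_ac = ctx_union_assoc ctx_union_commute ctx_union_left_commute

lemma ctx_drop_union: "ctx_drop n (ctx_union \<Gamma> \<Delta>) = ctx_union (ctx_drop n \<Gamma>) (ctx_drop n \<Delta>)"
  by (simp add: ctx_drop_def ctx_union_def)

lemma ctx_restr_union: "ctx_restr n (ctx_union \<Gamma> \<Delta>) = ctx_union (ctx_restr n \<Gamma>) (ctx_restr n \<Delta>)"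
  by (auto simp: ctx_restr_def ctx_union_def)

lemma tight_ctx_empty [intro]: "tight_ctx empty_ctx"
  by (simp add: tight_ctx_def empty_ctx_def)

lemma tight_ctx_union [intro]: "tight_ctx \<Gamma> \<Longrightarrow> tight_ctx \<Delta> \<Longrightarrow> tight_ctx (ctx_union \<Gamma> \<Delta>)"
  by (auto simp: tight_ctx_def ctx_union_def)

lemma tight_ctx_drop [intro]: "tight_ctx \<Gamma> \<Longrightarrow> tight_ctx (ctx_drop n \<Gamma>)"
  by (simp add: tight_ctx_def ctx_drop_def)

lemma tight_ctx_restr [intro]: "tight_ctx \<Gamma> \<Longrightarrow> tight_ctx (ctx_restr n \<Gamma>)"
  by (simp add: tight_ctx_def ctx_restr_def)

lemma metyp_induct [consumes 1, case_names empty add]: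
  assumes "metyp \<Gamma> t A b e m f"
    and "P empty_ctx {#} 0 0 0 0"
    and "\<And>\<Gamma> A b e m f \<Delta> \<sigma> b' e' m' f'. metyp \<Gamma> t A b e m f \<Longrightarrow> P \<Gamma> A b e m f \<Longrightarrow>
           etyp \<Delta> t \<sigma> b' e' m' f' \<Longrightarrow>
           P (ctx_union \<Gamma> \<Delta>) (add_mset \<sigma> A) (b + b') (e + e') (m + m') (f + f')"
  shows "P \<Gamma> A b e m f"
proof -
  have "t' = t \<longrightarrow> P \<Gamma> A b e m f" if "metyp \<Gamma> t' A b e m f" for t'
    using that
    by (induction rule: etyp_metyp.inducts(2)[where ?P1.0 = "\<lambda>_ _ _ _ _ _ _. True"])
      (auto intro: assms(2,3))
  with assms(1) show ?thesis by blast
qed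

lemma metyp_empty_iff:
  "metyp \<Gamma> t {#} b e m f \<longleftrightarrow> \<Gamma> = empty_ctx \<and> b = 0 \<and> e = 0 \<and> m = 0 \<and> f = 0"
  by (auto elim: metyp.cases intro: m_empty)

lemma metyp_single_iff [simp]: "metyp \<Gamma> t {#\<sigma>#} b e m f \<longleftrightarrow> etyp \<Gamma> t \<sigma> b e m f"
proof
  assume "metyp \<Gamma> t {#\<sigma>#} b e m f"
  then show "etyp \<Gamma> t \<sigma> b e m f"
    by (cases rule: metyp.cases) (auto simp: metyp_empty_iff)
next
  assume "etyp \<Gamma> t \<sigma> b e m f"
  from m_add[OF m_empty this] show "metyp \<Gamma> t {#\<sigma>#} b e m f" by simp
qed

lemma metyp_union:
  assumes "metyp \<Gamma> t A b e m f" and "metyp \<Delta> t B b' e' m' f'"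
  shows "metyp (ctx_union \<Gamma> \<Delta>) t (A + B) (b + b') (e + e') (m + m') (f + f')"
  using assms(2)
proof (induction rule: metyp_induct)
  case empty
  from assms(1) show ?case by simp
next
  case (add \<Delta> B b' e' m' f' \<Theta> \<sigma> b'' e'' m'' f'')
  from m_add[OF add.IH add.hyps(2)] show ?case
    by (simp add: ctx_union_assoc add.assoc)
qed

lemma ptyp_PP_single: "ptyp \<Gamma> (PP p q) A e m f \<Longrightarrow> \<exists>\<tau>. A = {#\<tau>#}"
  by (cases rule: ptyp.cases) auto

section \<open>Tight typings of canonical forms\<close>

lemma tight_typing_match:
  assumes "tight_ctx \<Gamma>" "etyp \<Gamma> t \<sigma> 0 0 0 f" and "tight_ctx \<Delta>" "etyp \<Delta> n (Tt TN) 0 0 0 f'"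
  shows "\<exists>\<Gamma>'. tight_ctx \<Gamma>' \<and> etyp \<Gamma>' (Sub t (PP p q) n) \<sigma> 0 0 0 (f + f' + 1)"
proof -
  have "ptyp (ctx_restr (nv (PP p q)) \<Gamma>) (PP p q) {#Tt TN#} 0 0 1"
    using tight_ctx_restr[OF assms(1)] by (intro pat_p) (auto simp: ctx_restr_def)
  from t_match[OF assms(2) this] assms(4)
  have "etyp (ctx_union (ctx_drop (nv (PP p q)) \<Gamma>) \<Delta>) (Sub t (PP p q) n) \<sigma> 0 0 0 (f + f' + 1)"
    by simp
  with assms(1,3) show ?thesis by blast
qed

lemma canonical_tight_typing:
  shows "canM t \<Longrightarrow> \<exists>\<Gamma> tt. tight_ctx \<Gamma> \<and> etyp \<Gamma> t (Tt tt) 0 0 0 (csize t)"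
    and "canN n \<Longrightarrow> \<exists>\<Gamma>. tight_ctx \<Gamma> \<and> etyp \<Gamma> n (Tt TN) 0 0 0 (csize n)"
proof (induction t and n rule: canM_canN.inducts)
  case (cM_lam t p)
  then obtain \<Gamma> tt where "tight_ctx \<Gamma>" "etyp \<Gamma> t (Tt tt) 0 0 0 (csize t)" by blast
  with t_abs_p[OF this(2), of p] show ?case by auto
next
  case (cM_pair t u)
  from t_pair_p[of t u] show ?case by auto
next
  case (cM_sub t n p1 p2)
  then obtain \<Gamma> \<Delta> tt where "tight_ctx \<Gamma>" "etyp \<Gamma> t (Tt tt) 0 0 0 (csize t)"
    and "tight_ctx \<Delta>" "etyp \<Delta> n (Tt TN) 0 0 0 (csize n)" by blast
  with tight_typing_match[OF this, of p1 p2] show ?case by auto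
next
  case (cM_N n)
  then show ?case by blast
next
  case (cN_var x)
  have "tight_ctx (\<lambda>y. if y = x then {#Tt TN#} else {#})"
    by (simp add: tight_ctx_def is_tight_def)
  with t_ax[of x "Tt TN"] show ?case by auto
next
  case (cN_app n t)
  then obtain \<Gamma> where "tight_ctx \<Gamma>" "etyp \<Gamma> n (Tt TN) 0 0 0 (csize n)" by blast
  with t_app_p[OF this(2), of t] show ?case by auto
next
  case (cN_sub n n' p1 p2)
  then obtain \<Gamma> \<Delta> where "tight_ctx \<Gamma>" "etyp \<Gamma> n (Tt TN) 0 0 0 (csize n)"
    and "tight_ctx \<Delta>" "etyp \<Delta> n' (Tt TN) 0 0 0 (csize n')" by blast
  with tight_typing_match[OF this, of p1 p2] show ?case by auto
qed

section \<open>Typings of shifted terms\<close>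

definition ctx_shift :: "nat \<Rightarrow> nat \<Rightarrow> ctx \<Rightarrow> ctx" where
  "ctx_shift k c \<Gamma> = (\<lambda>x. if x < c then \<Gamma> x else if x < c + k then {#} else \<Gamma> (x - k))"

lemma ctx_shift_empty [simp]: "ctx_shift k c empty_ctx = empty_ctx"
  by (simp add: ctx_shift_def empty_ctx_def fun_eq_iff)

lemma ctx_shift_union: "ctx_shift k c (ctx_union \<Gamma> \<Delta>) = ctx_union (ctx_shift k c \<Gamma>) (ctx_shift k c \<Delta>)"
  by (auto simp: ctx_shift_def ctx_union_def)

lemma ctx_restr_shift: "n \<le> c \<Longrightarrow> ctx_restr n (ctx_shift k c \<Gamma>) = ctx_restr n \<Gamma>"
  by (auto simp: ctx_restr_def ctx_shift_def)

lemma ctx_drop_shift: "n \<le> c \<Longrightarrow> ctx_drop n (ctx_shift k c \<Gamma>) = ctx_shift k (c - n) (ctx_drop n \<Gamma>)"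
  by (auto simp: ctx_drop_def ctx_shift_def fun_eq_iff)

lemma ctx_restr_shift_self [simp]: "ctx_restr n (ctx_shift n 0 \<Gamma>) = empty_ctx"
  by (simp add: ctx_restr_def ctx_shift_def empty_ctx_def fun_eq_iff)

lemma ctx_drop_shift_self [simp]: "ctx_drop n (ctx_shift n 0 \<Gamma>) = \<Gamma>"
  by (simp add: ctx_drop_def ctx_shift_def)

inductive_cases etyp_VarE: "etyp \<Gamma> (Var x) \<sigma> b e m f"
inductive_cases etyp_LamE: "etyp \<Gamma> (Lam p t) \<sigma> b e m f"
inductive_cases etyp_AppE: "etyp \<Gamma> (App t u) \<sigma> b e m f"
inductive_cases etyp_PairE: "etyp \<Gamma> (Pair t u) \<sigma> b e m f"
inductive_cases etyp_SubE: "etyp \<Gamma> (Sub t p u) \<sigma> b e m f"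

lemma metyp_shift_inv_lift:
  assumes "metyp \<Gamma> (shift k c t) A b e m f"
    and "\<And>\<Gamma> \<sigma> b e m f. etyp \<Gamma> (shift k c t) \<sigma> b e m f \<Longrightarrow>
           \<exists>\<Gamma>'. \<Gamma> = ctx_shift k c \<Gamma>' \<and> etyp \<Gamma>' t \<sigma> b e m f"
  shows "\<exists>\<Gamma>'. \<Gamma> = ctx_shift k c \<Gamma>' \<and> metyp \<Gamma>' t A b e m f"
  using assms(1)
proof (induction rule: metyp_induct)
  case empty
  from m_empty show ?case by (intro exI[of _ empty_ctx]) simp
next
  case (add \<Gamma> A b e m f \<Delta> \<sigma> b' e' m' f')
  obtain \<Gamma>' \<Delta>' where "\<Gamma> = ctx_shift k c \<Gamma>'" "metyp \<Gamma>' t A b e m f"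
    and "\<Delta> = ctx_shift k c \<Delta>'" "etyp \<Delta>' t \<sigma> b' e' m' f'"
    using add.IH assms(2)[OF add.hyps(2)] by blast
  with m_add[of \<Gamma>' t A b e m f \<Delta>'] show ?case
    by (intro exI[of _ "ctx_union \<Gamma>' \<Delta>'"]) (simp add: ctx_shift_union)
qed

lemma etyp_shift_inv:
  "etyp \<Gamma> (shift k c t) \<sigma> b e m f \<Longrightarrow> \<exists>\<Gamma>'. \<Gamma> = ctx_shift k c \<Gamma>' \<and> etyp \<Gamma>' t \<sigma> b e m f"
proof (induction t arbitrary: c \<Gamma> \<sigma> b e m f)
  case (Var i)
  then have "\<Gamma> = ctx_shift k c (\<lambda>y. if y = i then {#\<sigma>#} else {#})" "b = 0" "e = 0" "m = 0" "f = 0"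
    by (auto elim!: etyp_VarE simp: ctx_shift_def fun_eq_iff)
  with t_ax show ?case by blast
next
  case (Lam p t)
  from Lam.prems[unfolded shift.simps] show ?case
  proof (cases rule: etyp_LamE[consumes 1, case_names abs abs_p])
    case (abs \<Gamma>\<^sub>1 \<sigma>' b\<^sub>1 e\<^sub>1 m\<^sub>1 f\<^sub>1 A ep mp fp)
    obtain \<Gamma>' where "\<Gamma>\<^sub>1 = ctx_shift k (c + nv p) \<Gamma>'" "etyp \<Gamma>' t \<sigma>' b\<^sub>1 e\<^sub>1 m\<^sub>1 f\<^sub>1"
      using Lam.IH[OF abs(7)] by blast
    with abs t_abs[of \<Gamma>' t \<sigma>' b\<^sub>1 e\<^sub>1 m\<^sub>1 f\<^sub>1 p A ep mp fp] show ?thesis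
      by (intro exI[of _ "ctx_drop (nv p) \<Gamma>'"]) (simp add: ctx_restr_shift ctx_drop_shift)
  next
    case (abs_p \<Gamma>\<^sub>1 tt f\<^sub>1)
    obtain \<Gamma>' where "\<Gamma>\<^sub>1 = ctx_shift k (c + nv p) \<Gamma>'" "etyp \<Gamma>' t (Tt tt) b e m f\<^sub>1"
      using Lam.IH[OF abs_p(4)] by blast
    with abs_p t_abs_p[of \<Gamma>' t tt b e m f\<^sub>1 p] show ?thesis
      by (intro exI[of _ "ctx_drop (nv p) \<Gamma>'"]) (simp add: ctx_restr_shift ctx_drop_shift)
  qed
next
  case (Pair t u)
  from Pair.prems[unfolded shift.simps] show ?case
  proof (cases rule: etyp_PairE[consumes 1, case_names pair pair_p])
    case (pair \<Gamma>\<^sub>1 A bt et mt ft \<Delta> B bu eu mu fu)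
    obtain \<Gamma>' \<Delta>' where "\<Gamma>\<^sub>1 = ctx_shift k c \<Gamma>'" "metyp \<Gamma>' t A bt et mt ft"
      and "\<Delta> = ctx_shift k c \<Delta>'" "metyp \<Delta>' u B bu eu mu fu"
      using metyp_shift_inv_lift[OF pair(7) Pair.IH(1)] metyp_shift_inv_lift[OF pair(8) Pair.IH(2)]
      by blast
    with pair t_pair[of \<Gamma>' t A bt et mt ft \<Delta>'] show ?thesis
      by (intro exI[of _ "ctx_union \<Gamma>' \<Delta>'"]) (simp add: ctx_shift_union)
  next
    case pair_p
    with t_pair_p[of t u] show ?thesis by (intro exI[of _ empty_ctx]) simp
  qed
next
  case (App t u)
  from App.prems[unfolded shift.simps] show ?case
  proof (cases rule: etyp_AppE[consumes 1, case_names app app_p])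
    case (app \<Gamma>\<^sub>1 A bt et mt ft \<Delta> bu eu mu fu)
    obtain \<Gamma>' \<Delta>' where "\<Gamma>\<^sub>1 = ctx_shift k c \<Gamma>'" "etyp \<Gamma>' t (Arr A \<sigma>) bt et mt ft"
      and "\<Delta> = ctx_shift k c \<Delta>'" "metyp \<Delta>' u A bu eu mu fu"
      using App.IH(1)[OF app(6)] metyp_shift_inv_lift[OF app(7) App.IH(2)] by blast
    with app t_app[of \<Gamma>' t A \<sigma> bt et mt ft \<Delta>'] show ?thesis
      by (intro exI[of _ "ctx_union \<Gamma>' \<Delta>'"]) (simp add: ctx_shift_union)
  next
    case (app_p f\<^sub>1)
    with App.IH(1)[OF app_p(3)] t_app_p[of _ t b e m f\<^sub>1 u] show ?thesis by auto
  qed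
next
  case (Sub t p u)
  from Sub.prems[unfolded shift.simps] show ?case
  proof (cases rule: etyp_SubE[consumes 1])
    case (1 \<Gamma>\<^sub>1 bt et mt ft A ep mp fp \<Delta> bu eu mu fu)
    obtain \<Gamma>' \<Delta>' where "\<Gamma>\<^sub>1 = ctx_shift k (c + nv p) \<Gamma>'" "etyp \<Gamma>' t \<sigma> bt et mt ft"
      and "\<Delta> = ctx_shift k c \<Delta>'" "metyp \<Delta>' u A bu eu mu fu"
      using Sub.IH(1)[OF 1(6)] metyp_shift_inv_lift[OF 1(8) Sub.IH(2)] by blast
    with 1 t_match[of \<Gamma>' t \<sigma> bt et mt ft p A ep mp fp \<Delta>' u bu eu mu fu] show ?thesis
      by (intro exI[of _ "ctx_union (ctx_drop (nv p) \<Gamma>') \<Delta>'"])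
        (simp add: ctx_restr_shift ctx_drop_shift ctx_shift_union)
  qed
qed

lemma metyp_shift_inv:
  "metyp \<Gamma> (shift k c t) A b e m f \<Longrightarrow> \<exists>\<Gamma>'. \<Gamma> = ctx_shift k c \<Gamma>' \<and> metyp \<Gamma>' t A b e m f"
  using metyp_shift_inv_lift[OF _ etyp_shift_inv] .

section \<open>Anti-substitution\<close>

text \<open>The context of \<open>subst c s t\<close> assembled from a context \<open>\<Gamma>\<close> of \<open>t\<close> and a context \<open>\<Delta>\<close> of \<open>s\<close>.\<close>

definition ctx_subst :: "nat \<Rightarrow> ctx \<Rightarrow> ctx \<Rightarrow> ctx" where
  "ctx_subst c \<Gamma> \<Delta> = ctx_union (\<lambda>x. if x < c then \<Gamma> x else \<Gamma> (Suc x)) (ctx_shift c 0 \<Delta>)"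

lemma ctx_subst_empty [simp]: "ctx_subst c empty_ctx empty_ctx = empty_ctx"
  by (simp add: ctx_subst_def ctx_union_def ctx_shift_def empty_ctx_def fun_eq_iff)

lemma ctx_subst_union:
  "ctx_union (ctx_subst c \<Gamma>\<^sub>1 \<Delta>\<^sub>1) (ctx_subst c \<Gamma>\<^sub>2 \<Delta>\<^sub>2) = ctx_subst c (ctx_union \<Gamma>\<^sub>1 \<Gamma>\<^sub>2) (ctx_union \<Delta>\<^sub>1 \<Delta>\<^sub>2)"
  by (simp add: ctx_subst_def ctx_union_def ctx_shift_def fun_eq_iff add_ac)

lemma ctx_restr_subst: "n \<le> c \<Longrightarrow> ctx_restr n (ctx_subst c \<Gamma> \<Delta>) = ctx_restr n \<Gamma>"
  by (simp add: ctx_subst_def ctx_union_def ctx_shift_def ctx_restr_def fun_eq_iff)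

lemma ctx_drop_subst: "n \<le> c \<Longrightarrow> ctx_drop n (ctx_subst c \<Gamma> \<Delta>) = ctx_subst (c - n) (ctx_drop n \<Gamma>) \<Delta>"
  by (auto simp: ctx_subst_def ctx_union_def ctx_shift_def ctx_drop_def fun_eq_iff)

definition subst_split ::
  "(ctx \<Rightarrow> trm \<Rightarrow> 'a \<Rightarrow> nat \<Rightarrow> nat \<Rightarrow> nat \<Rightarrow> nat \<Rightarrow> bool) \<Rightarrow> nat \<Rightarrow> trm \<Rightarrow>
    ctx \<Rightarrow> trm \<Rightarrow> 'a \<Rightarrow> nat \<Rightarrow> nat \<Rightarrow> nat \<Rightarrow> nat \<Rightarrow> bool" where
  "subst_split J c s \<Gamma> t X b e m f \<longleftrightarrow>
     (\<exists>\<Gamma>\<^sub>t \<Delta> b\<^sub>1 e\<^sub>1 m\<^sub>1 f\<^sub>1 b\<^sub>2 e\<^sub>2 m\<^sub>2 f\<^sub>2. J \<Gamma>\<^sub>t t X b\<^sub>1 e\<^sub>1 m\<^sub>1 f\<^sub>1 \<and> metyp \<Delta> s (\<Gamma>\<^sub>t c) b\<^sub>2 e\<^sub>2 m\<^sub>2 f\<^sub>2 \<and>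
        \<Gamma> = ctx_subst c \<Gamma>\<^sub>t \<Delta> \<and> b = b\<^sub>1 + b\<^sub>2 \<and> e = e\<^sub>1 + e\<^sub>2 \<and> m = m\<^sub>1 + m\<^sub>2 \<and> f = f\<^sub>1 + f\<^sub>2)"

lemma subst_splitI:
  "J \<Gamma>\<^sub>t t X b\<^sub>1 e\<^sub>1 m\<^sub>1 f\<^sub>1 \<Longrightarrow> metyp \<Delta> s (\<Gamma>\<^sub>t c) b\<^sub>2 e\<^sub>2 m\<^sub>2 f\<^sub>2 \<Longrightarrow>
   subst_split J c s (ctx_subst c \<Gamma>\<^sub>t \<Delta>) t X (b\<^sub>1 + b\<^sub>2) (e\<^sub>1 + e\<^sub>2) (m\<^sub>1 + m\<^sub>2) (f\<^sub>1 + f\<^sub>2)"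
  unfolding subst_split_def by blast

lemma subst_split_empty:
  assumes "J empty_ctx t X b e m f"
  shows "subst_split J c s empty_ctx t X b e m f"
proof -
  have "metyp empty_ctx s (empty_ctx c) 0 0 0 0"
    using m_empty[of s] by (simp add: empty_ctx_def)
  from subst_splitI[of J, OF assms this] show ?thesis by simp
qed

lemma subst_split_binary:
  assumes "subst_split J\<^sub>1 c s \<Gamma>\<^sub>1 t\<^sub>1 X\<^sub>1 b\<^sub>1 e\<^sub>1 m\<^sub>1 f\<^sub>1" and "subst_split J\<^sub>2 c s \<Gamma>\<^sub>2 t\<^sub>2 X\<^sub>2 b\<^sub>2 e\<^sub>2 m\<^sub>2 f\<^sub>2"
    and rule: "\<And>\<Gamma>\<^sub>1 b\<^sub>1 e\<^sub>1 m\<^sub>1 f\<^sub>1 \<Gamma>\<^sub>2 b\<^sub>2 e\<^sub>2 m\<^sub>2 f\<^sub>2. J\<^sub>1 \<Gamma>\<^sub>1 t\<^sub>1 X\<^sub>1 b\<^sub>1 e\<^sub>1 m\<^sub>1 f\<^sub>1 \<Longrightarrow> J\<^sub>2 \<Gamma>\<^sub>2 t\<^sub>2 X\<^sub>2 b\<^sub>2 e\<^sub>2 m\<^sub>2 f\<^sub>2 \<Longrightarrow>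
       J (ctx_union \<Gamma>\<^sub>1 \<Gamma>\<^sub>2) t X (b\<^sub>1 + b\<^sub>2) (e\<^sub>1 + e\<^sub>2) (m\<^sub>1 + m\<^sub>2) (f\<^sub>1 + f\<^sub>2)"
  shows "subst_split J c s (ctx_union \<Gamma>\<^sub>1 \<Gamma>\<^sub>2) t X (b\<^sub>1 + b\<^sub>2) (e\<^sub>1 + e\<^sub>2) (m\<^sub>1 + m\<^sub>2) (f\<^sub>1 + f\<^sub>2)"
proof -
  obtain \<Theta>\<^sub>1 \<Delta>\<^sub>1 b\<^sub>1' e\<^sub>1' m\<^sub>1' f\<^sub>1' b\<^sub>1'' e\<^sub>1'' m\<^sub>1'' f\<^sub>1''
    where 1: "J\<^sub>1 \<Theta>\<^sub>1 t\<^sub>1 X\<^sub>1 b\<^sub>1' e\<^sub>1' m\<^sub>1' f\<^sub>1'" "metyp \<Delta>\<^sub>1 s (\<Theta>\<^sub>1 c) b\<^sub>1'' e\<^sub>1'' m\<^sub>1'' f\<^sub>1''"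
      "\<Gamma>\<^sub>1 = ctx_subst c \<Theta>\<^sub>1 \<Delta>\<^sub>1" "b\<^sub>1 = b\<^sub>1' + b\<^sub>1''" "e\<^sub>1 = e\<^sub>1' + e\<^sub>1''" "m\<^sub>1 = m\<^sub>1' + m\<^sub>1''" "f\<^sub>1 = f\<^sub>1' + f\<^sub>1''"
    using assms(1) unfolding subst_split_def by blast
  obtain \<Theta>\<^sub>2 \<Delta>\<^sub>2 b\<^sub>2' e\<^sub>2' m\<^sub>2' f\<^sub>2' b\<^sub>2'' e\<^sub>2'' m\<^sub>2'' f\<^sub>2''
    where 2: "J\<^sub>2 \<Theta>\<^sub>2 t\<^sub>2 X\<^sub>2 b\<^sub>2' e\<^sub>2' m\<^sub>2' f\<^sub>2'" "metyp \<Delta>\<^sub>2 s (\<Theta>\<^sub>2 c) b\<^sub>2'' e\<^sub>2'' m\<^sub>2'' f\<^sub>2''"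
      "\<Gamma>\<^sub>2 = ctx_subst c \<Theta>\<^sub>2 \<Delta>\<^sub>2" "b\<^sub>2 = b\<^sub>2' + b\<^sub>2''" "e\<^sub>2 = e\<^sub>2' + e\<^sub>2''" "m\<^sub>2 = m\<^sub>2' + m\<^sub>2''" "f\<^sub>2 = f\<^sub>2' + f\<^sub>2''"
    using assms(2) unfolding subst_split_def by blast
  have "metyp (ctx_union \<Delta>\<^sub>1 \<Delta>\<^sub>2) s (ctx_union \<Theta>\<^sub>1 \<Theta>\<^sub>2 c)
      (b\<^sub>1'' + b\<^sub>2'') (e\<^sub>1'' + e\<^sub>2'') (m\<^sub>1'' + m\<^sub>2'') (f\<^sub>1'' + f\<^sub>2'')"
    using metyp_union[OF 1(2) 2(2)] by (simp add: ctx_union_def)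
  from subst_splitI[of J, OF rule[OF 1(1) 2(1)] this] show ?thesis
    by (simp add: 1 2 ctx_subst_union add_ac)
qed

lemma subst_split_bind:
  assumes "subst_split J\<^sub>1 (c + n) s \<Gamma>\<^sub>1 t\<^sub>1 X\<^sub>1 b e m f"
    and rule: "\<And>\<Theta> b e m f. J\<^sub>1 \<Theta> t\<^sub>1 X\<^sub>1 b e m f \<Longrightarrow> ctx_restr n \<Theta> = ctx_restr n \<Gamma>\<^sub>1 \<Longrightarrow>
       J (ctx_drop n \<Theta>) t X (b + db) (e + de) (m + dm) (f + df)"
  shows "subst_split J c s (ctx_drop n \<Gamma>\<^sub>1) t X (b + db) (e + de) (m + dm) (f + df)"
proof -
  obtain \<Theta> \<Delta> b\<^sub>1 e\<^sub>1 m\<^sub>1 f\<^sub>1 b\<^sub>2 e\<^sub>2 m\<^sub>2 f\<^sub>2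
    where "J\<^sub>1 \<Theta> t\<^sub>1 X\<^sub>1 b\<^sub>1 e\<^sub>1 m\<^sub>1 f\<^sub>1" "metyp \<Delta> s (\<Theta> (c + n)) b\<^sub>2 e\<^sub>2 m\<^sub>2 f\<^sub>2"
      and \<Gamma>\<^sub>1: "\<Gamma>\<^sub>1 = ctx_subst (c + n) \<Theta> \<Delta>"
      and counters: "b = b\<^sub>1 + b\<^sub>2" "e = e\<^sub>1 + e\<^sub>2" "m = m\<^sub>1 + m\<^sub>2" "f = f\<^sub>1 + f\<^sub>2"
    using assms(1) unfolding subst_split_def by blast
  have "J (ctx_drop n \<Theta>) t X (b\<^sub>1 + db) (e\<^sub>1 + de) (m\<^sub>1 + dm) (f\<^sub>1 + df)"
    using rule[OF \<open>J\<^sub>1 \<Theta> t\<^sub>1 X\<^sub>1 b\<^sub>1 e\<^sub>1 m\<^sub>1 f\<^sub>1\<close>] \<Gamma>\<^sub>1 by (simp add: ctx_restr_subst)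
  moreover have "metyp \<Delta> s (ctx_drop n \<Theta> c) b\<^sub>2 e\<^sub>2 m\<^sub>2 f\<^sub>2"
    using \<open>metyp \<Delta> s (\<Theta> (c + n)) b\<^sub>2 e\<^sub>2 m\<^sub>2 f\<^sub>2\<close> by (simp add: ctx_drop_def add.commute)
  moreover have "ctx_drop n \<Gamma>\<^sub>1 = ctx_subst c (ctx_drop n \<Theta>) \<Delta>"
    using \<Gamma>\<^sub>1 by (simp add: ctx_drop_subst)
  ultimately show ?thesis
    using subst_splitI[of J] counters
    by (fastforce simp: add_ac)
qed

lemma subst_split_match:
  assumes "subst_split etyp (c + nv p) s \<Gamma>\<^sub>1 t \<sigma> bt et mt ft"
    and "ptyp (ctx_restr (nv p) \<Gamma>\<^sub>1) p A ep mp fp"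
    and "subst_split metyp c s \<Delta> u A bu eu mu fu"
  shows "subst_split etyp c s (ctx_union (ctx_drop (nv p) \<Gamma>\<^sub>1) \<Delta>) (Sub t p u) \<sigma>
           (bt + bu) (et + eu + ep) (mt + mu + mp) (ft + fu + fp)"
proof -
  obtain \<Theta> \<Delta>\<^sub>1 b\<^sub>1 e\<^sub>1 m\<^sub>1 f\<^sub>1 b\<^sub>2 e\<^sub>2 m\<^sub>2 f\<^sub>2
    where t: "etyp \<Theta> t \<sigma> b\<^sub>1 e\<^sub>1 m\<^sub>1 f\<^sub>1" "metyp \<Delta>\<^sub>1 s (\<Theta> (c + nv p)) b\<^sub>2 e\<^sub>2 m\<^sub>2 f\<^sub>2"
      "\<Gamma>\<^sub>1 = ctx_subst (c + nv p) \<Theta> \<Delta>\<^sub>1"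
      "bt = b\<^sub>1 + b\<^sub>2" "et = e\<^sub>1 + e\<^sub>2" "mt = m\<^sub>1 + m\<^sub>2" "ft = f\<^sub>1 + f\<^sub>2"
    using assms(1) unfolding subst_split_def by blast
  obtain \<Theta>' \<Delta>\<^sub>2 b\<^sub>3 e\<^sub>3 m\<^sub>3 f\<^sub>3 b\<^sub>4 e\<^sub>4 m\<^sub>4 f\<^sub>4
    where u: "metyp \<Theta>' u A b\<^sub>3 e\<^sub>3 m\<^sub>3 f\<^sub>3" "metyp \<Delta>\<^sub>2 s (\<Theta>' c) b\<^sub>4 e\<^sub>4 m\<^sub>4 f\<^sub>4"
      "\<Delta> = ctx_subst c \<Theta>' \<Delta>\<^sub>2"
      "bu = b\<^sub>3 + b\<^sub>4" "eu = e\<^sub>3 + e\<^sub>4" "mu = m\<^sub>3 + m\<^sub>4" "fu = f\<^sub>3 + f\<^sub>4"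
    using assms(3) unfolding subst_split_def by blast
  have "ptyp (ctx_restr (nv p) \<Theta>) p A ep mp fp"
    using assms(2) t(3) by (simp add: ctx_restr_subst)
  from t_match[OF t(1) this u(1)]
  have "etyp (ctx_union (ctx_drop (nv p) \<Theta>) \<Theta>') (Sub t p u) \<sigma>
      (b\<^sub>1 + b\<^sub>3) (e\<^sub>1 + e\<^sub>3 + ep) (m\<^sub>1 + m\<^sub>3 + mp) (f\<^sub>1 + f\<^sub>3 + fp)" .
  moreover have "metyp (ctx_union \<Delta>\<^sub>1 \<Delta>\<^sub>2) s (ctx_union (ctx_drop (nv p) \<Theta>) \<Theta>' c)
      (b\<^sub>2 + b\<^sub>4) (e\<^sub>2 + e\<^sub>4) (m\<^sub>2 + m\<^sub>4) (f\<^sub>2 + f\<^sub>4)"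
    using metyp_union[OF t(2) u(2)] by (simp add: ctx_union_def ctx_drop_def add.commute)
  ultimately show ?thesis
    using subst_splitI[of etyp] t(3-7) u(3-7)
    by (fastforce simp: ctx_drop_subst ctx_subst_union add_ac)
qed

lemma metyp_subst_inv_lift:
  assumes "metyp \<Gamma> (subst c s t) A b e m f"
    and "\<And>\<Gamma> \<sigma> b e m f. etyp \<Gamma> (subst c s t) \<sigma> b e m f \<Longrightarrow> subst_split etyp c s \<Gamma> t \<sigma> b e m f"
  shows "subst_split metyp c s \<Gamma> t A b e m f"
  using assms(1)
proof (induction rule: metyp_induct)
  case empty
  from m_empty show ?case by (rule subst_split_empty)
next
  case (add \<Gamma> A b e m f \<Delta> \<sigma> b' e' m' f')
  show ?case
    by (rule subst_split_binary[OF add.IH assms(2)[OF add.hyps(2)]]) (rule m_add)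
qed

lemma etyp_subst_Var_inv:
  assumes "etyp \<Gamma> (subst c s (Var i)) \<sigma> b e m f"
  shows "subst_split etyp c s \<Gamma> (Var i) \<sigma> b e m f"
proof -
  let ?\<Gamma>\<^sub>i = "\<lambda>y. if y = i then {#\<sigma>#} else {#}"
  have split: "subst_split etyp c s (ctx_subst c ?\<Gamma>\<^sub>i \<Delta>) (Var i) \<sigma> b' e' m' f'"
    if "metyp \<Delta> s (?\<Gamma>\<^sub>i c) b' e' m' f'" for \<Delta> b' e' m' f'
    using subst_splitI[of etyp, OF t_ax that] by simp
  show ?thesis
  proof (cases "i = c")
    case True
    with assms obtain \<Delta> where "\<Gamma> = ctx_shift c 0 \<Delta>" "etyp \<Delta> s \<sigma> b e m f"
      using etyp_shift_inv by fastforce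
    moreover have "ctx_subst c ?\<Gamma>\<^sub>i \<Delta> = ctx_shift c 0 \<Delta>"
      using True by (simp add: ctx_subst_def ctx_union_def fun_eq_iff)
    ultimately show ?thesis
      using True split[of \<Delta> b e m f] by simp
  next
    case False
    with assms have "\<Gamma> = ctx_subst c ?\<Gamma>\<^sub>i empty_ctx" "b = 0" "e = 0" "m = 0" "f = 0"
      by (auto elim!: etyp_VarE simp: ctx_subst_def ctx_union_def ctx_shift_def empty_ctx_def
          fun_eq_iff split: if_splits)
    with False split[of empty_ctx 0 0 0 0] m_empty show ?thesis by simp
  qed
qed

lemma etyp_subst_inv:
  "etyp \<Gamma> (subst c s t) \<sigma> b e m f \<Longrightarrow> subst_split etyp c s \<Gamma> t \<sigma> b e m f"
proof (induction t arbitrary: c \<Gamma> \<sigma> b e m f)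
  case (Var i)
  then show ?case by (rule etyp_subst_Var_inv)
next
  case (Lam p t)
  from Lam.prems[unfolded subst.simps] show ?case
  proof (cases rule: etyp_LamE[consumes 1, case_names abs abs_p])
    case (abs \<Gamma>\<^sub>1 \<sigma>' b\<^sub>1 e\<^sub>1 m\<^sub>1 f\<^sub>1 A ep mp fp)
    have "subst_split etyp c s (ctx_drop (nv p) \<Gamma>\<^sub>1) (Lam p t) (Arr A \<sigma>')
        (b\<^sub>1 + 1) (e\<^sub>1 + ep) (m\<^sub>1 + mp) (f\<^sub>1 + fp)"
      by (rule subst_split_bind[OF Lam.IH[OF abs(7)]]) (use abs(8) in \<open>metis t_abs\<close>)
    with abs show ?thesis by simp
  next
    case (abs_p \<Gamma>\<^sub>1 tt f\<^sub>1)
    have "subst_split etyp c s (ctx_drop (nv p) \<Gamma>\<^sub>1) (Lam p t) (Tt TM) (b + 0) (e + 0) (m + 0) (f\<^sub>1 + 1)"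
      by (rule subst_split_bind[OF Lam.IH[OF abs_p(4)]]) (use abs_p(5) t_abs_p in \<open>simp\<close>)
    with abs_p show ?thesis by simp
  qed
next
  case (Pair t u)
  from Pair.prems[unfolded subst.simps] show ?case
  proof (cases rule: etyp_PairE[consumes 1, case_names pair pair_p])
    case (pair \<Gamma>\<^sub>1 A bt et mt ft \<Delta> B bu eu mu fu)
    have "subst_split metyp c s \<Gamma>\<^sub>1 t A bt et mt ft"
      by (rule metyp_subst_inv_lift[OF pair(7) Pair.IH(1)])
    moreover have "subst_split metyp c s \<Delta> u B bu eu mu fu"
      by (rule metyp_subst_inv_lift[OF pair(8) Pair.IH(2)])
    ultimately show ?thesis unfolding pair(1-6)
      by (rule subst_split_binary) (rule t_pair)
  next
    case pair_p
    from subst_split_empty[of etyp, OF t_pair_p] show ?thesis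
      unfolding pair_p by simp
  qed
next
  case (App t u)
  from App.prems[unfolded subst.simps] show ?case
  proof (cases rule: etyp_AppE[consumes 1, case_names app app_p])
    case (app \<Gamma>\<^sub>1 A bt et mt ft \<Delta> bu eu mu fu)
    have "subst_split metyp c s \<Delta> u A bu eu mu fu"
      by (rule metyp_subst_inv_lift[OF app(7) App.IH(2)])
    with App.IH(1)[OF app(6)] show ?thesis unfolding app(1-5)
      by (rule subst_split_binary) (rule t_app)
  next
    case (app_p f\<^sub>1)
    from App.IH(1)[OF app_p(3)] show ?thesis
      unfolding app_p subst_split_def by (fastforce intro: t_app_p)
  qed
next
  case (Sub t p u)
  from Sub.prems[unfolded subst.simps] show ?case
  proof (cases rule: etyp_SubE[consumes 1])
    case (1 \<Gamma>\<^sub>1 bt et mt ft A ep mp fp \<Delta> bu eu mu fu)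
    from subst_split_match[OF Sub.IH(1)[OF 1(6)] 1(7) metyp_subst_inv_lift[OF 1(8) Sub.IH(2)]]
    show ?thesis unfolding 1(1-5) .
  qed
qed

section \<open>Subject expansion\<close>

definition expands :: "trm \<Rightarrow> trm \<Rightarrow> nat \<Rightarrow> nat \<Rightarrow> nat \<Rightarrow> bool" where
  "expands t' t db de dm \<longleftrightarrow>
     (\<forall>\<Gamma> \<sigma> b e m f. etyp \<Gamma> t' \<sigma> b e m f \<longrightarrow> etyp \<Gamma> t \<sigma> (b + db) (e + de) (m + dm) f)"

lemma expandsI:
  "(\<And>\<Gamma> \<sigma> b e m f. etyp \<Gamma> t' \<sigma> b e m f \<Longrightarrow> etyp \<Gamma> t \<sigma> (b + db) (e + de) (m + dm) f) \<Longrightarrow>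
   expands t' t db de dm"
  unfolding expands_def by blast

lemma expandsD: "expands t' t db de dm \<Longrightarrow> etyp \<Gamma> t' \<sigma> b e m f \<Longrightarrow>
   etyp \<Gamma> t \<sigma> (b + db) (e + de) (m + dm) f"
  unfolding expands_def by blast

lemma expands_refl: "expands t t 0 0 0"
  by (rule expandsI) simp

lemma expands_trans:
  assumes "expands t'' t' db de dm" and "expands t' t db' de' dm'"
  shows "expands t'' t (db + db') (de + de') (dm + dm')"
proof (rule expandsI)
  fix \<Gamma> \<sigma> b e m f
  assume "etyp \<Gamma> t'' \<sigma> b e m f"
  with expandsD[OF assms(2) expandsD[OF assms(1)]]
  show "etyp \<Gamma> t \<sigma> (b + (db + db')) (e + (de + de')) (m + (dm + dm')) f"
    by (simp add: add.assoc)
qed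

lemma expands_Sub_App: "expands (Sub (App t (shift (nv q) 0 u)) q w) (App (Sub t q w) u) 0 0 0"
proof (rule expandsI)
  fix \<Gamma> \<sigma> b e m f
  assume "etyp \<Gamma> (Sub (App t (shift (nv q) 0 u)) q w) \<sigma> b e m f"
  then obtain \<Gamma>\<^sub>1 bt et mt ft A ep mp fp \<Delta> bu eu mu fu
    where \<Gamma>: "\<Gamma> = ctx_union (ctx_drop (nv q) \<Gamma>\<^sub>1) \<Delta>"
      and app: "etyp \<Gamma>\<^sub>1 (App t (shift (nv q) 0 u)) \<sigma> bt et mt ft"
      and q: "ptyp (ctx_restr (nv q) \<Gamma>\<^sub>1) q A ep mp fp" and w: "metyp \<Delta> w A bu eu mu fu"
      and counters: "b = bt + bu" "e = et + eu + ep" "m = mt + mu + mp" "f = ft + fu + fp"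
    by (rule etyp_SubE) blast
  from app show "etyp \<Gamma> (App (Sub t q w) u) \<sigma> (b + 0) (e + 0) (m + 0) f"
  proof (cases rule: etyp_AppE[consumes 1, case_names app app_p])
    case (app \<Gamma>\<^sub>2 A' b\<^sub>1 e\<^sub>1 m\<^sub>1 f\<^sub>1 \<Delta>\<^sub>2 b\<^sub>2 e\<^sub>2 m\<^sub>2 f\<^sub>2)
    obtain \<Delta>\<^sub>2' where \<Delta>\<^sub>2: "\<Delta>\<^sub>2 = ctx_shift (nv q) 0 \<Delta>\<^sub>2'" "metyp \<Delta>\<^sub>2' u A' b\<^sub>2 e\<^sub>2 m\<^sub>2 f\<^sub>2"
      using metyp_shift_inv[OF app(7)] by blast
    have "ptyp (ctx_restr (nv q) \<Gamma>\<^sub>2) q A ep mp fp"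
      using q app(1) \<Delta>\<^sub>2(1) by (simp add: ctx_restr_union)
    from t_app[OF t_match[OF app(6) this w] \<Delta>\<^sub>2(2)] show ?thesis
      using \<Gamma> app(1-5) \<Delta>\<^sub>2(1) counters
      by (simp add: ctx_drop_union ctx_union_ac add_ac)
  next
    case (app_p f\<^sub>1)
    from t_app_p[OF t_match[OF app_p(3) q w], of u] show ?thesis
      using \<Gamma> app_p(1,2) counters
      by (simp add: add_ac)
  qed
qed

lemma expands_Sub_Sub:
  "expands (Sub (Sub (shift (nv q) (nv (PP p\<^sub>1 p\<^sub>2)) t) (PP p\<^sub>1 p\<^sub>2) u) q w)
     (Sub t (PP p\<^sub>1 p\<^sub>2) (Sub u q w)) 0 0 0"
proof (rule expandsI)
  fix \<Gamma> \<sigma> b e m f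
  let ?p = "PP p\<^sub>1 p\<^sub>2"
  assume "etyp \<Gamma> (Sub (Sub (shift (nv q) (nv ?p) t) ?p u) q w) \<sigma> b e m f"
  then obtain \<Gamma>\<^sub>1 bt et mt ft A ep mp fp \<Delta> bu eu mu fu
    where \<Gamma>: "\<Gamma> = ctx_union (ctx_drop (nv q) \<Gamma>\<^sub>1) \<Delta>"
      and inner: "etyp \<Gamma>\<^sub>1 (Sub (shift (nv q) (nv ?p) t) ?p u) \<sigma> bt et mt ft"
      and q: "ptyp (ctx_restr (nv q) \<Gamma>\<^sub>1) q A ep mp fp" and w: "metyp \<Delta> w A bu eu mu fu"
      and counters: "b = bt + bu" "e = et + eu + ep" "m = mt + mu + mp" "f = ft + fu + fp"
    by (rule etyp_SubE) blast
  from inner obtain \<Gamma>\<^sub>2 bt' et' mt' ft' B ep' mp' fp' \<Delta>\<^sub>2 bu' eu' mu' fu'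
    where \<Gamma>\<^sub>1: "\<Gamma>\<^sub>1 = ctx_union (ctx_drop (nv ?p) \<Gamma>\<^sub>2) \<Delta>\<^sub>2"
      and t: "etyp \<Gamma>\<^sub>2 (shift (nv q) (nv ?p) t) \<sigma> bt' et' mt' ft'"
      and p: "ptyp (ctx_restr (nv ?p) \<Gamma>\<^sub>2) ?p B ep' mp' fp'" and u: "metyp \<Delta>\<^sub>2 u B bu' eu' mu' fu'"
      and inner_counters: "bt = bt' + bu'" "et = et' + eu' + ep'" "mt = mt' + mu' + mp'" "ft = ft' + fu' + fp'"
    by (rule etyp_SubE) blast
  obtain \<beta> where B: "B = {#\<beta>#}"
    using ptyp_PP_single[OF p] by blast
  obtain \<Gamma>\<^sub>2' where \<Gamma>\<^sub>2: "\<Gamma>\<^sub>2 = ctx_shift (nv q) (nv ?p) \<Gamma>\<^sub>2'" "etyp \<Gamma>\<^sub>2' t \<sigma> bt' et' mt' ft'"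
    using etyp_shift_inv[OF t] by blast
  have "ptyp (ctx_restr (nv ?p) \<Gamma>\<^sub>2') ?p B ep' mp' fp'"
    using p \<Gamma>\<^sub>2(1) by (simp add: ctx_restr_shift)
  moreover have "ptyp (ctx_restr (nv q) \<Delta>\<^sub>2) q A ep mp fp"
    using q \<Gamma>\<^sub>1 \<Gamma>\<^sub>2(1) by (simp add: ctx_restr_union ctx_drop_shift)
  with u w B have "metyp (ctx_union (ctx_drop (nv q) \<Delta>\<^sub>2) \<Delta>) (Sub u q w) B
      (bu' + bu) (eu' + eu + ep) (mu' + mu + mp) (fu' + fu + fp)"
    by (simp add: t_match)
  ultimately have "etyp (ctx_union (ctx_drop (nv ?p) \<Gamma>\<^sub>2') (ctx_union (ctx_drop (nv q) \<Delta>\<^sub>2) \<Delta>))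
      (Sub t ?p (Sub u q w)) \<sigma> (bt' + (bu' + bu)) (et' + (eu' + eu + ep) + ep')
      (mt' + (mu' + mu + mp) + mp') (ft' + (fu' + fu + fp) + fp')"
    by (rule t_match[OF \<Gamma>\<^sub>2(2)])
  then show "etyp \<Gamma> (Sub t ?p (Sub u q w)) \<sigma> (b + 0) (e + 0) (m + 0) f"
    using \<Gamma> \<Gamma>\<^sub>1 \<Gamma>\<^sub>2(1) counters inner_counters
    by (simp add: ctx_drop_union ctx_drop_shift ctx_union_assoc add_ac)
qed

lemma expands_beta: "expands (Sub t p u) (App (Lam p t) u) 1 0 0"
proof (rule expandsI)
  fix \<Gamma> \<sigma> b e m f
  assume "etyp \<Gamma> (Sub t p u) \<sigma> b e m f"
  then obtain \<Gamma>\<^sub>1 bt et mt ft A ep mp fp \<Delta> bu eu mu fu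
    where "\<Gamma> = ctx_union (ctx_drop (nv p) \<Gamma>\<^sub>1) \<Delta>" "etyp \<Gamma>\<^sub>1 t \<sigma> bt et mt ft"
      "ptyp (ctx_restr (nv p) \<Gamma>\<^sub>1) p A ep mp fp" "metyp \<Delta> u A bu eu mu fu"
      "b = bt + bu" "e = et + eu + ep" "m = mt + mu + mp" "f = ft + fu + fp"
    by (rule etyp_SubE) blast
  with t_app[OF t_abs, of \<Gamma>\<^sub>1 t \<sigma> bt et mt ft p A ep mp fp \<Delta> u bu eu mu fu]
  show "etyp \<Gamma> (App (Lam p t) u) \<sigma> (b + 1) (e + 0) (m + 0) f"
    by (simp add: add_ac)
qed

lemma expands_match:
  "expands (Sub (Sub t p\<^sub>1 (shift (nv p\<^sub>2) 0 u\<^sub>1)) p\<^sub>2 u\<^sub>2) (Sub t (PP p\<^sub>1 p\<^sub>2) (Pair u\<^sub>1 u\<^sub>2)) 0 0 1"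
proof (rule expandsI)
  fix \<Gamma> \<sigma> b e m f
  assume "etyp \<Gamma> (Sub (Sub t p\<^sub>1 (shift (nv p\<^sub>2) 0 u\<^sub>1)) p\<^sub>2 u\<^sub>2) \<sigma> b e m f"
  then obtain \<Gamma>\<^sub>2 bt et mt ft A\<^sub>2 ep\<^sub>2 mp\<^sub>2 fp\<^sub>2 \<Delta>\<^sub>2 bu\<^sub>2 eu\<^sub>2 mu\<^sub>2 fu\<^sub>2
    where \<Gamma>: "\<Gamma> = ctx_union (ctx_drop (nv p\<^sub>2) \<Gamma>\<^sub>2) \<Delta>\<^sub>2"
      and inner: "etyp \<Gamma>\<^sub>2 (Sub t p\<^sub>1 (shift (nv p\<^sub>2) 0 u\<^sub>1)) \<sigma> bt et mt ft"
      and p\<^sub>2: "ptyp (ctx_restr (nv p\<^sub>2) \<Gamma>\<^sub>2) p\<^sub>2 A\<^sub>2 ep\<^sub>2 mp\<^sub>2 fp\<^sub>2" and u\<^sub>2: "metyp \<Delta>\<^sub>2 u\<^sub>2 A\<^sub>2 bu\<^sub>2 eu\<^sub>2 mu\<^sub>2 fu\<^sub>2"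
      and counters: "b = bt + bu\<^sub>2" "e = et + eu\<^sub>2 + ep\<^sub>2" "m = mt + mu\<^sub>2 + mp\<^sub>2" "f = ft + fu\<^sub>2 + fp\<^sub>2"
    by (rule etyp_SubE) blast
  from inner obtain \<Gamma>\<^sub>1 bt' et' mt' ft' A\<^sub>1 ep\<^sub>1 mp\<^sub>1 fp\<^sub>1 \<Delta>\<^sub>1 bu\<^sub>1 eu\<^sub>1 mu\<^sub>1 fu\<^sub>1
    where \<Gamma>\<^sub>2: "\<Gamma>\<^sub>2 = ctx_union (ctx_drop (nv p\<^sub>1) \<Gamma>\<^sub>1) \<Delta>\<^sub>1"
      and t: "etyp \<Gamma>\<^sub>1 t \<sigma> bt' et' mt' ft'"
      and p\<^sub>1: "ptyp (ctx_restr (nv p\<^sub>1) \<Gamma>\<^sub>1) p\<^sub>1 A\<^sub>1 ep\<^sub>1 mp\<^sub>1 fp\<^sub>1"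
      and u\<^sub>1: "metyp \<Delta>\<^sub>1 (shift (nv p\<^sub>2) 0 u\<^sub>1) A\<^sub>1 bu\<^sub>1 eu\<^sub>1 mu\<^sub>1 fu\<^sub>1"
      and inner_counters: "bt = bt' + bu\<^sub>1" "et = et' + eu\<^sub>1 + ep\<^sub>1" "mt = mt' + mu\<^sub>1 + mp\<^sub>1" "ft = ft' + fu\<^sub>1 + fp\<^sub>1"
    by (rule etyp_SubE) blast
  obtain \<Delta>\<^sub>1' where \<Delta>\<^sub>1: "\<Delta>\<^sub>1 = ctx_shift (nv p\<^sub>2) 0 \<Delta>\<^sub>1'" "metyp \<Delta>\<^sub>1' u\<^sub>1 A\<^sub>1 bu\<^sub>1 eu\<^sub>1 mu\<^sub>1 fu\<^sub>1"
    using metyp_shift_inv[OF u\<^sub>1] by blast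
  have "ctx_restr (nv (PP p\<^sub>1 p\<^sub>2)) \<Gamma>\<^sub>1 =
      (\<lambda>x. if x < nv p\<^sub>1 then ctx_restr (nv p\<^sub>1) \<Gamma>\<^sub>1 x else ctx_restr (nv p\<^sub>2) \<Gamma>\<^sub>2 (x - nv p\<^sub>1))"
    by (auto simp: \<Gamma>\<^sub>2 \<Delta>\<^sub>1(1) ctx_restr_def ctx_union_def ctx_drop_def ctx_shift_def fun_eq_iff)
  with pat_prod[OF p\<^sub>1 p\<^sub>2] have "ptyp (ctx_restr (nv (PP p\<^sub>1 p\<^sub>2)) \<Gamma>\<^sub>1) (PP p\<^sub>1 p\<^sub>2) {#Prod A\<^sub>1 A\<^sub>2#}
      (ep\<^sub>1 + ep\<^sub>2) (1 + mp\<^sub>1 + mp\<^sub>2) (fp\<^sub>1 + fp\<^sub>2)"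
    by simp
  moreover from t_pair[OF \<Delta>\<^sub>1(2) u\<^sub>2] have "metyp (ctx_union \<Delta>\<^sub>1' \<Delta>\<^sub>2) (Pair u\<^sub>1 u\<^sub>2) {#Prod A\<^sub>1 A\<^sub>2#}
      (bu\<^sub>1 + bu\<^sub>2) (eu\<^sub>1 + eu\<^sub>2) (mu\<^sub>1 + mu\<^sub>2) (fu\<^sub>1 + fu\<^sub>2)"
    by simp
  ultimately have "etyp (ctx_union (ctx_drop (nv (PP p\<^sub>1 p\<^sub>2)) \<Gamma>\<^sub>1) (ctx_union \<Delta>\<^sub>1' \<Delta>\<^sub>2))
      (Sub t (PP p\<^sub>1 p\<^sub>2) (Pair u\<^sub>1 u\<^sub>2)) \<sigma> (bt' + (bu\<^sub>1 + bu\<^sub>2)) (et' + (eu\<^sub>1 + eu\<^sub>2) + (ep\<^sub>1 + ep\<^sub>2))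
      (mt' + (mu\<^sub>1 + mu\<^sub>2) + (1 + mp\<^sub>1 + mp\<^sub>2)) (ft' + (fu\<^sub>1 + fu\<^sub>2) + (fp\<^sub>1 + fp\<^sub>2))"
    by (rule t_match[OF t])
  moreover have "\<Gamma> = ctx_union (ctx_drop (nv (PP p\<^sub>1 p\<^sub>2)) \<Gamma>\<^sub>1) (ctx_union \<Delta>\<^sub>1' \<Delta>\<^sub>2)"
    by (simp add: \<Gamma> \<Gamma>\<^sub>2 \<Delta>\<^sub>1(1) ctx_union_def ctx_drop_def ctx_shift_def fun_eq_iff add_ac)
  ultimately show "etyp \<Gamma> (Sub t (PP p\<^sub>1 p\<^sub>2) (Pair u\<^sub>1 u\<^sub>2)) \<sigma> (b + 0) (e + 0) (m + 1) f"
    using counters inner_counters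
    by (simp add: add_ac)
qed

lemma expands_subst: "expands (subst 0 u t) (Sub t PV u) 0 1 0"
proof (rule expandsI)
  fix \<Gamma> \<sigma> b e m f
  assume "etyp \<Gamma> (subst 0 u t) \<sigma> b e m f"
  then have "subst_split etyp 0 u \<Gamma> t \<sigma> b e m f"
    by (rule etyp_subst_inv)
  then obtain \<Theta> \<Delta> b\<^sub>1 e\<^sub>1 m\<^sub>1 f\<^sub>1 b\<^sub>2 e\<^sub>2 m\<^sub>2 f\<^sub>2
    where t: "etyp \<Theta> t \<sigma> b\<^sub>1 e\<^sub>1 m\<^sub>1 f\<^sub>1" and u: "metyp \<Delta> u (\<Theta> 0) b\<^sub>2 e\<^sub>2 m\<^sub>2 f\<^sub>2"
      and "\<Gamma> = ctx_subst 0 \<Theta> \<Delta>"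
      and counters: "b = b\<^sub>1 + b\<^sub>2" "e = e\<^sub>1 + e\<^sub>2" "m = m\<^sub>1 + m\<^sub>2" "f = f\<^sub>1 + f\<^sub>2"
    unfolding subst_split_def by blast
  have "ctx_restr (nv PV) \<Theta> = (\<lambda>x. if x = 0 then \<Theta> 0 else {#})"
    by (simp add: ctx_restr_def fun_eq_iff)
  with pat_v have "ptyp (ctx_restr (nv PV) \<Theta>) PV (\<Theta> 0) 1 0 0"
    by simp
  from t_match[OF t this u]
  have "etyp (ctx_union (ctx_drop (nv PV) \<Theta>) \<Delta>) (Sub t PV u) \<sigma> (b\<^sub>1 + b\<^sub>2) (e\<^sub>1 + e\<^sub>2 + 1)
      (m\<^sub>1 + m\<^sub>2 + 0) (f\<^sub>1 + f\<^sub>2 + 0)" .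
  moreover have "\<Gamma> = ctx_union (ctx_drop (nv PV) \<Theta>) \<Delta>"
    by (simp add: \<open>\<Gamma> = ctx_subst 0 \<Theta> \<Delta>\<close> ctx_subst_def ctx_union_def ctx_drop_def ctx_shift_def fun_eq_iff)
  ultimately show "etyp \<Gamma> (Sub t PV u) \<sigma> (b + 0) (e + 1) (m + 0) f"
    using counters
    by (simp add: add_ac)
qed

lemma expands_Lam:
  assumes "expands t' t db de dm"
  shows "expands (Lam p t') (Lam p t) db de dm"
proof (rule expandsI)
  fix \<Gamma> \<sigma> b e m f
  assume "etyp \<Gamma> (Lam p t') \<sigma> b e m f"
  then show "etyp \<Gamma> (Lam p t) \<sigma> (b + db) (e + de) (m + dm) f"
  proof (cases rule: etyp_LamE[consumes 1, case_names abs abs_p])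
    case (abs \<Gamma>\<^sub>1 \<sigma>' b\<^sub>1 e\<^sub>1 m\<^sub>1 f\<^sub>1 A ep mp fp)
    from t_abs[OF expandsD[OF assms abs(7)] abs(8)] show ?thesis
      unfolding abs(1-6) by (simp add: add_ac)
  next
    case (abs_p \<Gamma>\<^sub>1 tt f\<^sub>1)
    from t_abs_p[OF expandsD[OF assms abs_p(4)] abs_p(5)] show ?thesis
      unfolding abs_p(1-3) by simp
  qed
qed

lemma expands_App:
  assumes "expands s' s db de dm"
  shows "expands (App s' u) (App s u) db de dm"
proof (rule expandsI)
  fix \<Gamma> \<sigma> b e m f
  assume "etyp \<Gamma> (App s' u) \<sigma> b e m f"
  then show "etyp \<Gamma> (App s u) \<sigma> (b + db) (e + de) (m + dm) f"
  proof (cases rule: etyp_AppE[consumes 1, case_names app app_p])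
    case (app \<Gamma>\<^sub>1 A bt et mt ft \<Delta> bu eu mu fu)
    from t_app[OF expandsD[OF assms app(6)] app(7)] show ?thesis
      unfolding app(1-5) by (simp add: add_ac)
  next
    case (app_p f\<^sub>1)
    from t_app_p[OF expandsD[OF assms app_p(3)]] show ?thesis
      unfolding app_p(1,2) by simp
  qed
qed

lemma expands_Sub_left:
  assumes "expands t' t db de dm"
  shows "expands (Sub t' p u) (Sub t p u) db de dm"
proof (rule expandsI)
  fix \<Gamma> \<sigma> b e m f
  assume "etyp \<Gamma> (Sub t' p u) \<sigma> b e m f"
  then show "etyp \<Gamma> (Sub t p u) \<sigma> (b + db) (e + de) (m + dm) f"
  proof (cases rule: etyp_SubE[consumes 1])
    case (1 \<Gamma>\<^sub>1 bt et mt ft A ep mp fp \<Delta> bu eu mu fu)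
    from t_match[OF expandsD[OF assms 1(6)] 1(7,8)] show ?thesis
      unfolding 1(1-5) by (simp add: add_ac)
  qed
qed

lemma expands_Sub_right:
  assumes "expands u' u db de dm"
  shows "expands (Sub t (PP p\<^sub>1 p\<^sub>2) u') (Sub t (PP p\<^sub>1 p\<^sub>2) u) db de dm"
proof (rule expandsI)
  fix \<Gamma> \<sigma> b e m f
  assume "etyp \<Gamma> (Sub t (PP p\<^sub>1 p\<^sub>2) u') \<sigma> b e m f"
  then show "etyp \<Gamma> (Sub t (PP p\<^sub>1 p\<^sub>2) u) \<sigma> (b + db) (e + de) (m + dm) f"
  proof (cases rule: etyp_SubE[consumes 1])
    case (1 \<Gamma>\<^sub>1 bt et mt ft A ep mp fp \<Delta> bu eu mu fu)
    obtain \<tau> where A: "A = {#\<tau>#}"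
      using ptyp_PP_single[OF 1(7)] by blast
    with 1(8) expandsD[OF assms] have "metyp \<Delta> u A (bu + db) (eu + de) (mu + dm) fu"
      by simp
    from t_match[OF 1(6,7) this] show ?thesis
      unfolding 1(1-5) by (simp add: add_ac)
  qed
qed

lemma nbv_Nil [simp]: "nbv [] = 0"
  by (simp add: nbv_def)

lemma nbv_Cons [simp]: "nbv ((q, w) # L) = nv q + nbv L"
  by (simp add: nbv_def)

lemma shift_0 [simp]: "shift 0 c t = t"
  by (induction t arbitrary: c) auto

lemma shift_shift: "shift k c (shift k' c t) = shift (k + k') c t"
  by (induction t arbitrary: c) auto

lemma expands_beta_plug:
  "expands (plug L (Sub t p (shift (nbv L) 0 u))) (App (plug L (Lam p t)) u) 1 0 0"
proof (induction L arbitrary: u)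
  case Nil
  from expands_beta show ?case by simp
next
  case (Cons qw L)
  obtain q w where qw: "qw = (q, w)" by fastforce
  have "shift (nbv (qw # L)) 0 u = shift (nbv L) 0 (shift (nv q) 0 u)"
    by (simp add: qw shift_shift add.commute)
  with expands_Sub_left[OF Cons.IH, where p = q and u = w]
  have "expands (plug (qw # L) (Sub t p (shift (nbv (qw # L)) 0 u)))
      (Sub (App (plug L (Lam p t)) (shift (nv q) 0 u)) q w) 1 0 0"
    by (simp add: qw)
  from expands_trans[OF this expands_Sub_App] show ?case
    by (simp add: qw)
qed

lemma expands_match_plug:
  "expands (plug L (Sub (Sub (shift (nbv L) (nv p\<^sub>1 + nv p\<^sub>2) t) p\<^sub>1 (shift (nv p\<^sub>2) 0 u\<^sub>1)) p\<^sub>2 u\<^sub>2))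
     (Sub t (PP p\<^sub>1 p\<^sub>2) (plug L (Pair u\<^sub>1 u\<^sub>2))) 0 0 1"
proof (induction L arbitrary: t)
  case Nil
  from expands_match show ?case by simp
next
  case (Cons qw L)
  obtain q w where qw: "qw = (q, w)" by fastforce
  have "shift (nbv (qw # L)) (nv p\<^sub>1 + nv p\<^sub>2) t
      = shift (nbv L) (nv p\<^sub>1 + nv p\<^sub>2) (shift (nv q) (nv p\<^sub>1 + nv p\<^sub>2) t)"
    by (simp add: qw shift_shift add.commute)
  with expands_Sub_left[OF Cons.IH, where p = q and u = w]
  have "expands (plug (qw # L) (Sub (Sub (shift (nbv (qw # L)) (nv p\<^sub>1 + nv p\<^sub>2) t)
        p\<^sub>1 (shift (nv p\<^sub>2) 0 u\<^sub>1)) p\<^sub>2 u\<^sub>2))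
      (Sub (Sub (shift (nv q) (nv (PP p\<^sub>1 p\<^sub>2)) t) (PP p\<^sub>1 p\<^sub>2) (plug L (Pair u\<^sub>1 u\<^sub>2))) q w) 0 0 1"
    by (simp add: qw)
  from expands_trans[OF this expands_Sub_Sub] show ?case
    by (simp add: qw)
qed

lemma hred_expands:
  "(k, t') \<in> hred t \<Longrightarrow> expands t' t (of_bool (k = KB)) (of_bool (k = KE)) (of_bool (k = KM))"
proof (induction t arbitrary: k t')
  case (Lam p t)
  then obtain t'' where "t' = Lam p t''" "(k, t'') \<in> hred t" by auto
  with Lam.IH show ?case by (blast intro: expands_Lam)
next
  case (App s u)
  from App.prems consider
      (beta) L p t where "k = KB" "s = plug L (Lam p t)" "t' = plug L (Sub t p (shift (nbv L) 0 u))"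
    | (left) s' where "t' = App s' u" "(k, s') \<in> hred s"
    by (auto split: if_splits)
  then show ?case
  proof cases
    case beta
    with expands_beta_plug show ?thesis by simp
  next
    case left
    with App.IH(1) show ?thesis by (blast intro: expands_App)
  qed
next
  case (Sub t p u)
  show ?case
  proof (cases p)
    case PV
    from Sub.prems consider (subst) "k = KE" "t' = subst 0 u t"
      | (left) t'' where "t' = Sub t'' PV u" "(k, t'') \<in> hred t"
      unfolding PV by (auto split: if_splits)
    then show ?thesis
    proof cases
      case subst
      with expands_subst show ?thesis unfolding PV by simp
    next
      case left
      with Sub.IH(1) show ?thesis unfolding PV by (blast intro: expands_Sub_left)
    qed
  next
    case (PP p\<^sub>1 p\<^sub>2)
    from Sub.prems consider
        (match) L u\<^sub>1 u\<^sub>2 where "k = KM" "u = plug L (Pair u\<^sub>1 u\<^sub>2)"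
          "t' = plug L (Sub (Sub (shift (nbv L) (nv p\<^sub>1 + nv p\<^sub>2) t) p\<^sub>1 (shift (nv p\<^sub>2) 0 u\<^sub>1)) p\<^sub>2 u\<^sub>2)"
      | (left) t'' where "t' = Sub t'' (PP p\<^sub>1 p\<^sub>2) u" "(k, t'') \<in> hred t"
      | (right) u' where "t' = Sub t (PP p\<^sub>1 p\<^sub>2) u'" "(k, u') \<in> hred u"
      unfolding PP by (auto split: if_splits)
    then show ?thesis
    proof cases
      case match
      with expands_match_plug show ?thesis unfolding PP by simp
    next
      case left
      with Sub.IH(1) show ?thesis unfolding PP by (blast intro: expands_Sub_left)
    next
      case right
      with Sub.IH(2) show ?thesis unfolding PP by (blast intro: expands_Sub_right)
    qed
  qed
qed simp_all

lemma hsteps_expands: "hsteps t b e m u \<Longrightarrow> expands u t b e m"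
proof (induction rule: hsteps.induct)
  case (hs_refl t)
  show ?case by (rule expands_refl)
next
  case (hs_B t' t b e m u)
  from expands_trans[OF hs_B.IH hred_expands[OF hs_B.hyps(1)]] show ?case by simp
next
  case (hs_E t' t b e m u)
  from expands_trans[OF hs_E.IH hred_expands[OF hs_E.hyps(1)]] show ?case by simp
next
  case (hs_M t' t b e m u)
  from expands_trans[OF hs_M.IH hred_expands[OF hs_M.hyps(1)]] show ?case by simp
qed

theorem theorem3:
  assumes "hsteps t b e m u" and "canM u"
  shows "\<exists>\<Gamma> tt. tight_ctx \<Gamma> \<and> etyp \<Gamma> t (Tt tt) b e m (csize u)"
proof -
  obtain \<Gamma> tt where "tight_ctx \<Gamma>" "etyp \<Gamma> u (Tt tt) 0 0 0 (csize u)"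
    using canonical_tight_typing(1)[OF assms(2)] by blast
  with expandsD[OF hsteps_expands[OF assms(1)] this(2)] show ?thesis
    by auto
qed

end
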